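(* Let $C$ be a single-qubit Pauli-Square-Root Clifford of order $2$ (i.e. $C^2=I$) and let $|\psi\rangle$ be a $+1$ eigenstate of $C$. Define the twirling map $\mathcal{T}_C(\rho)=\frac12\big(\rho+C\rho C^{\dagger}\big)$. Then for any single-qubit quantum channel $\mathcal{E}$, $$\mathcal{T}_C\circ\mathcal{E}(|\psi\rangle\langle\psi|)=(1-p)|\psi\rangle\langle\psi|+p\,P|\psi\rangle\langle\psi|P^{\dagger}$$ for some Pauli $P$ and some $0\le p\le 1$.
   Context: Paulis are tensor products of $I,X,Y,Z$ times a phase in $\{\pm1,\pm i\}$; a Clifford maps Paulis to Paulis under conjugation. A Pauli-Square-Root Clifford (PSC) is a Clifford that is not a Pauli and whose square is a Pauli. *)

theory Defs
  imports "Jordan_Normal_Form.Matrix" "HOL-Library.Complex_Order"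
begin

definition dag :: "complex mat \<Rightarrow> complex mat" where
  "dag A = mat (dim_col A) (dim_row A) (\<lambda>(i,j). cnj (A $$ (j,i)))"

definition pauliX :: "complex mat" where
  "pauliX = mat_of_rows_list 2 [[0,1],[1,0]]"
definition pauliY :: "complex mat" where
  "pauliY = mat_of_rows_list 2 [[0,-\<i>],[\<i>,0]]"
definition pauliZ :: "complex mat" where
  "pauliZ = mat_of_rows_list 2 [[1,0],[0,-1]]"

definition is_pauli :: "complex mat \<Rightarrow> bool" where
  "is_pauli P \<longleftrightarrow> (\<exists>c Q. c \<in> {1, -1, \<i>, -\<i>} \<and> Q \<in> {1\<^sub>m 2, pauliX, pauliY, pauliZ} \<and> P = c \<cdot>\<^sub>m Q)"

definition unitary2 :: "complex mat \<Rightarrow> bool" where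
  "unitary2 U \<longleftrightarrow> U \<in> carrier_mat 2 2 \<and> U * dag U = 1\<^sub>m 2 \<and> dag U * U = 1\<^sub>m 2"

definition is_clifford :: "complex mat \<Rightarrow> bool" where
  "is_clifford U \<longleftrightarrow> unitary2 U \<and> (\<forall>P. is_pauli P \<longrightarrow> is_pauli (U * P * dag U))"

definition is_PSC :: "complex mat \<Rightarrow> bool" where
  "is_PSC C \<longleftrightarrow> is_clifford C \<and> \<not> is_pauli C \<and> is_pauli (C * C)"

definition tr2 :: "complex mat \<Rightarrow> complex" where
  "tr2 A = A $$ (0,0) + A $$ (1,1)"

definition psd :: "nat \<Rightarrow> complex mat \<Rightarrow> bool" where
  "psd n M \<longleftrightarrow> M \<in> carrier_mat n n \<and>
     (\<forall>v \<in> carrier_vec n. (\<Sum>i<n. \<Sum>j<n. cnj (v $ i) * M $$ (i,j) * v $ j) \<ge> 0)"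

text \<open>(id_n \<otimes> E) applied to a 2n x 2n matrix viewed as an n x n array of 2 x 2 blocks.\<close>
definition ampl :: "nat \<Rightarrow> (complex mat \<Rightarrow> complex mat) \<Rightarrow> complex mat \<Rightarrow> complex mat" where
  "ampl n E M = mat (2*n) (2*n) (\<lambda>(i,j).
      E (mat 2 2 (\<lambda>(a,b). M $$ (2*(i div 2) + a, 2*(j div 2) + b))) $$ (i mod 2, j mod 2))"

definition is_channel :: "(complex mat \<Rightarrow> complex mat) \<Rightarrow> bool" where
  "is_channel E \<longleftrightarrow>
     (\<forall>A \<in> carrier_mat 2 2. E A \<in> carrier_mat 2 2) \<and>
     (\<forall>A \<in> carrier_mat 2 2. \<forall>B \<in> carrier_mat 2 2. \<forall>c::complex.
         E (c \<cdot>\<^sub>m A + B) = c \<cdot>\<^sub>m E A + E B) \<and>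
     (\<forall>A \<in> carrier_mat 2 2. tr2 (E A) = tr2 A) \<and>
     (\<forall>n M. psd (2*n) M \<longrightarrow> psd (2*n) (ampl n E M))"

definition ketbra :: "complex vec \<Rightarrow> complex mat" where
  "ketbra v = mat (dim_vec v) (dim_vec v) (\<lambda>(i,j). v $ i * cnj (v $ j))"

definition is_state :: "complex vec \<Rightarrow> bool" where
  "is_state v \<longleftrightarrow> v \<in> carrier_vec 2 \<and> (\<Sum>i<2. (cmod (v $ i))\<^sup>2) = 1"

definition twirl :: "complex mat \<Rightarrow> complex mat \<Rightarrow> complex mat" where
  "twirl C \<rho> = (1/2 :: complex) \<cdot>\<^sub>m (\<rho> + C * \<rho> * dag C)"

end

theory Submission
  imports Defs
begin

(* A unitary involution C that is not a scalar is Hermitian and traceless, so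
   P_+ = (I + C)/2 and P_- = (I - C)/2 (eigenproj C 1 and eigenproj C (-1) below) are its
   spectral projectors and |psi><psi| = P_+.
   For 2x2 matrices with tr A = 0 one has AB + BA = tr(AB) I + tr(B) A; with A = C, B = S C
   this reads S + C S C = tr(S) I + tr(S C) C, so the twirl of any S is
   tr(S P_+) P_+ + tr(S P_-) P_-.  For S = E(P_+) both weights are nonnegative by complete
   positivity and they add up to tr S = 1.  Finally, C Z C being a Pauli forces one of X, Y, Z
   to anticommute with C, and conjugating P_+ by that Pauli gives P_-. *)

lemma mat2_eqI:
  assumes "A \<in> carrier_mat 2 2" "B \<in> carrier_mat 2 2"
    and "A $$ (0,0) = B $$ (0,0)" "A $$ (0,1) = B $$ (0,1)"
    and "A $$ (1,0) = B $$ (1,0)" "A $$ (1,1) = B $$ (1,1)"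
  shows "A = B"
  using assms by (intro eq_matI) (auto simp: numeral_2_eq_2 less_Suc_eq)

lemma dim_dag [simp]: "dim_row (dag A) = dim_col A" "dim_col (dag A) = dim_row A"
  by (simp_all add: dag_def)

lemma dag_carrier [simp]: "A \<in> carrier_mat n m \<Longrightarrow> dag A \<in> carrier_mat m n"
  by (simp add: dag_def)

lemma index_dag [simp]:
  "A \<in> carrier_mat n m \<Longrightarrow> i < m \<Longrightarrow> j < n \<Longrightarrow> dag A $$ (i,j) = cnj (A $$ (j,i))"
  by (simp add: dag_def)

lemma ketbra_carrier [simp]: "v \<in> carrier_vec n \<Longrightarrow> ketbra v \<in> carrier_mat n n"
  by (simp add: ketbra_def)

lemma dim_ketbra [simp]: "dim_row (ketbra v) = dim_vec v" "dim_col (ketbra v) = dim_vec v"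
  by (simp_all add: ketbra_def)

lemma index_ketbra [simp]:
  "v \<in> carrier_vec n \<Longrightarrow> i < n \<Longrightarrow> j < n \<Longrightarrow> ketbra v $$ (i,j) = v $ i * cnj (v $ j)"
  by (simp add: ketbra_def)

lemma anticommutator_traceless:
  fixes A B :: "complex mat"
  assumes A: "A \<in> carrier_mat 2 2" and B: "B \<in> carrier_mat 2 2" and "tr2 A = 0"
  shows "A * B + B * A = tr2 (A * B) \<cdot>\<^sub>m 1\<^sub>m 2 + tr2 B \<cdot>\<^sub>m A"
proof -
  have "A $$ (1,1) = - A $$ (0,0)" using assms(3) by (simp add: tr2_def eq_neg_iff_add_eq_0 add.commute)
  then show ?thesis using A B
    by (intro mat2_eqI) (auto simp: scalar_prod_def numeral_2_eq_2 tr2_def algebra_simps)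
qed

lemma involution_traceless_or_scalar:
  fixes C :: "complex mat"
  assumes C: "C \<in> carrier_mat 2 2" and CC: "C * C = 1\<^sub>m 2"
  shows "(\<exists>c \<in> {1, -1}. C = c \<cdot>\<^sub>m 1\<^sub>m 2) \<or> tr2 C = 0"
proof (rule disjCI)
  assume tr: "\<not> tr2 C = 0"
  define z w v d where "z = C $$ (0,0)" and "w = C $$ (0,1)" and "v = C $$ (1,0)" and "d = C $$ (1,1)"
  have "(C * C) $$ (0,0) = 1" "(C * C) $$ (0,1) = 0" "(C * C) $$ (1,0) = 0" "(C * C) $$ (1,1) = 1"
    using CC by simp_all
  then have zz: "z * z + w * v = 1" and "w * (z + d) = 0" and "v * (z + d) = 0" and dd: "v * w + d * d = 1"
    using C by (auto simp: scalar_prod_def numeral_2_eq_2 z_def w_def v_def d_def algebra_simps)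
  moreover have "z + d \<noteq> 0" using tr by (simp add: tr2_def z_def d_def)
  ultimately have w: "w = 0" and v: "v = 0" by auto
  with zz dd have "(z - d) * (z + d) = 0" by (simp add: algebra_simps)
  with \<open>z + d \<noteq> 0\<close> have "d = z" by simp
  have "(z - 1) * (z + 1) = 0" using zz w by (simp add: algebra_simps)
  then have "z \<in> {1, -1}" by (auto simp: eq_neg_iff_add_eq_0)
  moreover have "C = z \<cdot>\<^sub>m 1\<^sub>m 2"
    using C w v \<open>d = z\<close> by (intro mat2_eqI) (simp_all add: z_def w_def v_def d_def)
  ultimately show "\<exists>c \<in> {1, -1}. C = c \<cdot>\<^sub>m 1\<^sub>m 2" by blast
qed

lemma dag_eq_self_if_involution:
  assumes C: "C \<in> carrier_mat n n" and "dag C * C = 1\<^sub>m n" and "C * C = 1\<^sub>m n"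
  shows "dag C = C"
proof -
  have "dag C = dag C * (C * C)" using C assms(3) by (simp add: right_mult_one_mat[of _ n n])
  also have "\<dots> = (dag C * C) * C" using C by (simp add: assoc_mult_mat[of _ n n _ n _ n])
  also have "\<dots> = C" using C assms(2) by simp
  finally show ?thesis .
qed

lemma mult_ketbra:
  assumes A: "A \<in> carrier_mat n n" and v: "v \<in> carrier_vec n"
  shows "A * ketbra v = mat n n (\<lambda>(i,j). (A *\<^sub>v v) $ i * cnj (v $ j))"
  using assms by (intro eq_matI) (auto simp: ketbra_def scalar_prod_def sum_distrib_right mult.assoc)

lemma ketbra_mult_mat_vec:
  assumes A: "A \<in> carrier_mat n n" and v: "v \<in> carrier_vec n"
  shows "ketbra (A *\<^sub>v v) = A * ketbra v * dag A"
proof (rule eq_matI)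
  fix i j assume "i < dim_row (A * ketbra v * dag A)" "j < dim_col (A * ketbra v * dag A)"
  then have i: "i < n" and j: "j < n" using A by auto
  have "(A * ketbra v * dag A) $$ (i,j) = (\<Sum>l<n. (A *\<^sub>v v) $ i * cnj (v $ l) * cnj (A $$ (j,l)))"
    using A v i j by (simp add: mult_ketbra scalar_prod_def atLeast0LessThan)
  also have "\<dots> = (A *\<^sub>v v) $ i * cnj ((A *\<^sub>v v) $ j)"
    using A v j by (simp add: scalar_prod_def sum_distrib_left atLeast0LessThan mult_ac)
  finally show "ketbra (A *\<^sub>v v) $$ (i,j) = (A * ketbra v * dag A) $$ (i,j)"
    using A i j by (simp add: ketbra_def)
qed (use A in \<open>auto simp: ketbra_def\<close>)

definition eigenproj :: "complex mat \<Rightarrow> complex \<Rightarrow> complex mat" where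
  "eigenproj C s = (1/2) \<cdot>\<^sub>m (1\<^sub>m 2 + s \<cdot>\<^sub>m C)"

lemma eigenproj_carrier [simp]: "C \<in> carrier_mat 2 2 \<Longrightarrow> eigenproj C s \<in> carrier_mat 2 2"
  by (simp add: eigenproj_def)

lemma tr2_mult_commute:
  "A \<in> carrier_mat 2 2 \<Longrightarrow> B \<in> carrier_mat 2 2 \<Longrightarrow> tr2 (A * B) = tr2 (B * A)"
  by (simp add: tr2_def scalar_prod_def numeral_2_eq_2 algebra_simps)

lemma tr2_mult_eigenproj:
  assumes "S \<in> carrier_mat 2 2" "C \<in> carrier_mat 2 2"
  shows "tr2 (S * eigenproj C s) = (tr2 S + s * tr2 (S * C)) / 2"
  using assms by (simp add: eigenproj_def tr2_def scalar_prod_def numeral_2_eq_2 field_simps)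

lemma tr2_ketbra_state:
  assumes "is_state v" shows "tr2 (ketbra v) = 1"
proof -
  have v: "v \<in> carrier_vec 2" and "(cmod (v $ 0))\<^sup>2 + (cmod (v $ 1))\<^sup>2 = 1"
    using assms by (simp_all add: is_state_def numeral_2_eq_2)
  then have "complex_of_real ((cmod (v $ 0))\<^sup>2) + complex_of_real ((cmod (v $ 1))\<^sup>2) = 1"
    by (metis of_real_1 of_real_add)
  then have "v $ 0 * cnj (v $ 0) + v $ 1 * cnj (v $ 1) = 1"
    unfolding complex_norm_square .
  then show ?thesis using v by (simp add: tr2_def)
qed

lemma mult_ketbra_eigenvector:
  assumes A: "A \<in> carrier_mat n n" and v: "v \<in> carrier_vec n" and eig: "A *\<^sub>v v = v"
  shows "A * ketbra v = ketbra v"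
  using mult_ketbra[OF A v] v by (simp add: eig ketbra_def)

lemma ketbra_eigenstate:
  assumes C: "C \<in> carrier_mat 2 2" and herm: "dag C = C" and tr: "tr2 C = 0"
    and \<psi>: "is_state \<psi>" and eig: "C *\<^sub>v \<psi> = \<psi>"
  shows "ketbra \<psi> = eigenproj C 1"
proof -
  define K where "K = ketbra \<psi>"
  have \<psi>c: "\<psi> \<in> carrier_vec 2" using \<psi> by (simp add: is_state_def)
  then have K: "K \<in> carrier_mat 2 2" by (simp add: K_def)
  have CK: "C * K = K" unfolding K_def using C \<psi>c eig by (rule mult_ketbra_eigenvector)
  have "C * K * C = K" using ketbra_mult_mat_vec[OF C \<psi>c] herm eig by (simp add: K_def)
  then have KC: "K * C = K" using CK by simp
  have trK: "tr2 K = 1" using \<psi> by (simp add: K_def tr2_ketbra_state)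
  have KK: "K + K = 1 \<cdot>\<^sub>m 1\<^sub>m 2 + 1 \<cdot>\<^sub>m C"
    using anticommutator_traceless[OF C K tr] CK KC trK by simp
  have "K $$ (i,j) + K $$ (i,j) = 1\<^sub>m 2 $$ (i,j) + C $$ (i,j)" if "i < 2" "j < 2" for i j
    using arg_cong[OF KK, of "\<lambda>M. M $$ (i,j)"] that C K by simp
  then show ?thesis
    using C K by (intro eq_matI) (auto simp: eigenproj_def K_def[symmetric] field_simps)
qed

lemma pauliXYZ_carrier: "P \<in> {pauliX, pauliY, pauliZ} \<Longrightarrow> P \<in> carrier_mat 2 2"
  by (auto simp: pauliX_def pauliY_def pauliZ_def mat_of_rows_list_def)

lemma dag_pauliXYZ: "P \<in> {pauliX, pauliY, pauliZ} \<Longrightarrow> dag P = P"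
  by (auto intro!: eq_matI
      simp: dag_def pauliX_def pauliY_def pauliZ_def mat_of_rows_list_def numeral_2_eq_2 less_Suc_eq)

lemma pauliXYZ_square: "P \<in> {pauliX, pauliY, pauliZ} \<Longrightarrow> P * P = 1\<^sub>m 2"
  by (auto intro!: eq_matI simp: pauliX_def pauliY_def pauliZ_def mat_of_rows_list_def
      scalar_prod_def numeral_2_eq_2 less_Suc_eq)

lemma is_pauli_XYZ: "P \<in> {pauliX, pauliY, pauliZ} \<Longrightarrow> is_pauli P"
  unfolding is_pauli_def by (rule exI[of _ 1], rule exI[of _ P]) (auto intro!: eq_matI)

lemma anticommuting_pauli:
  fixes C :: "complex mat"
  assumes C: "C \<in> carrier_mat 2 2" and tr: "tr2 C = 0" and "is_pauli (C * pauliZ * C)"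
  shows "\<exists>P \<in> {pauliX, pauliY, pauliZ}. P * C * P = - C"
proof -
  define z w v where "z = C $$ (0,0)" and "w = C $$ (0,1)" and "v = C $$ (1,0)"
  have c11: "C $$ (1,1) = - z" using tr by (simp add: tr2_def z_def eq_neg_iff_add_eq_0 add.commute)
  obtain c Q where Q: "Q \<in> {1\<^sub>m 2, pauliX, pauliY, pauliZ}" and CZC: "C * pauliZ * C = c \<cdot>\<^sub>m Q"
    using assms(3) unfolding is_pauli_def by blast
  have "Q \<in> carrier_mat 2 2" using Q pauliXYZ_carrier by auto
  then have Q01: "c * Q $$ (0,1) = 2 * (z * w)" and Q10: "c * Q $$ (1,0) = 2 * (z * v)"
    using arg_cong[OF CZC, of "\<lambda>M. M $$ (0,1)"] arg_cong[OF CZC, of "\<lambda>M. M $$ (1,0)"] C c11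
    by (auto simp: z_def w_def v_def pauliZ_def mat_of_rows_list_def scalar_prod_def numeral_2_eq_2)
  from Q have "z * w = z * v \<or> z * w = - (z * v)"
  proof (elim insertE emptyE)
    assume "Q = pauliY"
    then have "- (c * \<i>) = 2 * (z * w)" and "c * \<i> = 2 * (z * v)"
      using Q01 Q10 by (simp_all add: pauliY_def mat_of_rows_list_def)
    then have "2 * (z * w) = 2 * - (z * v)" by (metis mult_minus_right)
    then have "z * w = - (z * v)" by (metis mult_cancel_left zero_neq_numeral)
    then show ?thesis ..
  qed (use Q01 Q10 in \<open>auto simp: pauliX_def pauliZ_def mat_of_rows_list_def\<close>)
  then have "z * (v - w) = 0 \<or> z * (v + w) = 0"
    by (auto simp: algebra_simps)
  then have "z = 0 \<or> v = w \<or> v = - w"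
    by (auto simp: eq_neg_iff_add_eq_0)
  then show ?thesis
  proof (elim disjE)
    assume "z = 0"
    then show ?thesis using C c11
      by (intro bexI[of _ pauliZ] mat2_eqI)
        (auto simp: z_def pauliZ_def mat_of_rows_list_def scalar_prod_def numeral_2_eq_2)
  next
    assume "v = w"
    have i_sandwich: "\<i> * x * \<i> = - x" for x :: complex
      by (metis mult.commute mult.assoc complex_i_mult_minus)
    from \<open>v = w\<close> show ?thesis using C c11
      by (intro bexI[of _ pauliY] mat2_eqI)
        (auto simp: z_def w_def v_def i_sandwich pauliY_def mat_of_rows_list_def scalar_prod_def numeral_2_eq_2)
  next
    assume "v = - w"
    then show ?thesis using C c11
      by (intro bexI[of _ pauliX] mat2_eqI)
        (auto simp: z_def w_def v_def pauliX_def mat_of_rows_list_def scalar_prod_def numeral_2_eq_2)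
  qed
qed

lemma conjugate_eigenproj_anticommuting:
  assumes C: "C \<in> carrier_mat 2 2" and P: "P \<in> carrier_mat 2 2"
    and PP: "P * P = 1\<^sub>m 2" and anti: "P * C * P = - C"
  shows "P * eigenproj C s * P = eigenproj C (- s)"
proof -
  have sC: "s \<cdot>\<^sub>m C \<in> carrier_mat 2 2" and X: "1\<^sub>m 2 + s \<cdot>\<^sub>m C \<in> carrier_mat 2 2" using C by simp_all
  have "P * (1\<^sub>m 2 + s \<cdot>\<^sub>m C) * P = P * P + s \<cdot>\<^sub>m (P * C * P)"
    using P C sC by (simp add: mult_add_distrib_mat[OF P one_carrier_mat sC] mult_smult_distrib[OF P C]
        add_mult_distrib_mat[of _ 2 2 _ _ 2] mult_smult_assoc_mat[of _ 2 2 _ 2])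
  also have "s \<cdot>\<^sub>m (P * C * P) = (- s) \<cdot>\<^sub>m C"
    using C by (auto simp: anti)
  finally have "P * (1\<^sub>m 2 + s \<cdot>\<^sub>m C) * P = 1\<^sub>m 2 + (- s) \<cdot>\<^sub>m C"
    by (simp add: PP)
  moreover have "P * eigenproj C s * P = (1/2) \<cdot>\<^sub>m (P * (1\<^sub>m 2 + s \<cdot>\<^sub>m C) * P)"
    unfolding eigenproj_def using P X
    by (simp add: mult_smult_distrib[OF P X] mult_smult_assoc_mat[of _ 2 2 _ 2])
  ultimately show ?thesis by (simp add: eigenproj_def)
qed

lemma twirl_eigenproj_decomposition:
  assumes C: "C \<in> carrier_mat 2 2" and herm: "dag C = C" and CC: "C * C = 1\<^sub>m 2" and tr: "tr2 C = 0"
    and S: "S \<in> carrier_mat 2 2"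
  shows "twirl C S = tr2 (S * eigenproj C 1) \<cdot>\<^sub>m eigenproj C 1
                   + tr2 (S * eigenproj C (-1)) \<cdot>\<^sub>m eigenproj C (-1)" (is "_ = ?rhs")
proof -
  have SC: "S * C \<in> carrier_mat 2 2" using S C by simp
  have "C * (S * C) + S * C * C = tr2 (C * (S * C)) \<cdot>\<^sub>m 1\<^sub>m 2 + tr2 (S * C) \<cdot>\<^sub>m C"
    by (rule anticommutator_traceless[OF C SC tr])
  moreover have "S * C * C = S" using S C CC by simp
  moreover have "tr2 (C * (S * C)) = tr2 S" using tr2_mult_commute[OF C SC] S C CC by simp
  ultimately have H: "C * S * C + S = tr2 S \<cdot>\<^sub>m 1\<^sub>m 2 + tr2 (S * C) \<cdot>\<^sub>m C" using S C by simp
  show ?thesis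
  proof (rule eq_matI)
    fix i j assume "i < dim_row ?rhs" "j < dim_col ?rhs"
    then have ij: "i < 2" "j < 2" using C by (auto simp: eigenproj_def)
    have "(C * S * C) $$ (i,j) + S $$ (i,j) = tr2 S * 1\<^sub>m 2 $$ (i,j) + tr2 (S * C) * C $$ (i,j)"
      using arg_cong[OF H, of "\<lambda>M. M $$ (i,j)"] ij S C by simp
    then show "twirl C S $$ (i,j) = ?rhs $$ (i,j)"
      unfolding tr2_mult_eigenproj[OF S C] using ij S C by (simp add: twirl_def herm eigenproj_def field_simps)
  qed (use S C in \<open>simp_all add: twirl_def eigenproj_def\<close>)
qed

lemma psd_ketbra:
  assumes v: "v \<in> carrier_vec n" shows "psd n (ketbra v)"
  unfolding psd_def
proof (intro conjI ballI)
  show "ketbra v \<in> carrier_mat n n" using v by simp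
  fix u :: "complex vec" assume u: "u \<in> carrier_vec n"
  define x where "x = (\<Sum>i<n. cnj (u $ i) * v $ i)"
  have "(\<Sum>i<n. \<Sum>j<n. cnj (u $ i) * ketbra v $$ (i,j) * u $ j) = x * cnj x"
    using v by (simp add: x_def sum_product mult_ac) (subst sum.swap, simp add: mult_ac)
  also have "\<dots> = complex_of_real ((cmod x)\<^sup>2)" by (rule complex_norm_square[symmetric])
  finally show "(\<Sum>i<n. \<Sum>j<n. cnj (u $ i) * ketbra v $$ (i,j) * u $ j) \<ge> 0"
    by (simp add: less_eq_complex_def)
qed

lemma tr2_mult_ketbra_nonneg:
  assumes "psd 2 S" and v: "v \<in> carrier_vec 2"
  shows "0 \<le> tr2 (S * ketbra v)"
proof -
  have S: "S \<in> carrier_mat 2 2" using assms(1) by (simp add: psd_def)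
  have "0 \<le> (\<Sum>i<2. \<Sum>j<2. cnj (v $ i) * S $$ (i,j) * v $ j)"
    using assms by (simp add: psd_def)
  also have "\<dots> = tr2 (S * ketbra v)"
    using S v by (simp add: tr2_def scalar_prod_def numeral_2_eq_2 algebra_simps)
  finally show ?thesis .
qed

lemma channel_psd:
  assumes E: "is_channel E" and \<rho>: "psd 2 \<rho>" shows "psd 2 (E \<rho>)"
proof -
  have \<rho>c: "\<rho> \<in> carrier_mat 2 2" using \<rho> by (simp add: psd_def)
  then have E\<rho>: "E \<rho> \<in> carrier_mat 2 2" using E by (simp add: is_channel_def)
  have "mat 2 2 (($$) \<rho>) = \<rho>" using \<rho>c by (intro eq_matI) auto
  then have "ampl 1 E \<rho> = E \<rho>"
    unfolding ampl_def using E\<rho> by (intro eq_matI) auto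
  moreover have "psd (2 * 1) (ampl 1 E \<rho>)" using E \<rho> unfolding is_channel_def by (metis mult_1_right)
  ultimately show ?thesis by simp
qed

lemma complex_convex_weights:
  fixes a b :: complex
  assumes "0 \<le> a" "0 \<le> b" "a + b = 1"
  shows "\<exists>p::real. 0 \<le> p \<and> p \<le> 1 \<and> a = complex_of_real (1 - p) \<and> b = complex_of_real p"
proof (intro exI conjI)
  show b: "b = complex_of_real (Re b)" using assms(2) by (simp add: less_eq_complex_def complex_eq_iff)
  show "a = complex_of_real (1 - Re b)" using assms(3) b by (metis add_diff_cancel_right' of_real_1 of_real_diff)
  show "0 \<le> Re b" using assms(2) by (simp add: less_eq_complex_def)
  show "Re b \<le> 1" using assms(1) arg_cong[OF assms(3), of Re] by (simp add: less_eq_complex_def)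
qed

theorem proposition4:
  fixes C :: "complex mat" and \<psi> :: "complex vec" and E :: "complex mat \<Rightarrow> complex mat"
  assumes "is_PSC C"
    and "C * C = 1\<^sub>m 2"
    and "is_state \<psi>"
    and "C *\<^sub>v \<psi> = \<psi>"
    and "is_channel E"
  shows "\<exists>P (p::real). is_pauli P \<and> 0 \<le> p \<and> p \<le> 1 \<and>
           twirl C (E (ketbra \<psi>)) =
             complex_of_real (1 - p) \<cdot>\<^sub>m ketbra \<psi> + complex_of_real p \<cdot>\<^sub>m (P * ketbra \<psi> * dag P)"
proof -
  have C: "C \<in> carrier_mat 2 2" and "dag C * C = 1\<^sub>m 2" and "is_pauli (C * pauliZ * dag C)"
    and "\<not> is_pauli C"
    using assms(1) is_pauli_XYZ[of pauliZ] by (auto simp: is_PSC_def is_clifford_def unitary2_def)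
  have herm: "dag C = C" using dag_eq_self_if_involution[OF C] \<open>dag C * C = 1\<^sub>m 2\<close> assms(2) .
  have tr: "tr2 C = 0"
    using involution_traceless_or_scalar[OF C assms(2)] \<open>\<not> is_pauli C\<close> by (auto simp: is_pauli_def)
  have \<psi>: "\<psi> \<in> carrier_vec 2" using assms(3) by (simp add: is_state_def)
  have K: "ketbra \<psi> = eigenproj C 1" using ketbra_eigenstate[OF C herm tr assms(3,4)] .
  obtain P where P: "P \<in> {pauliX, pauliY, pauliZ}" and anti: "P * C * P = - C"
    using anticommuting_pauli[OF C tr] \<open>is_pauli (C * pauliZ * dag C)\<close> herm by auto
  have Pc: "P \<in> carrier_mat 2 2" using P by (rule pauliXYZ_carrier)
  have R: "P * ketbra \<psi> * dag P = eigenproj C (-1)"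
    using conjugate_eigenproj_anticommuting[OF C Pc pauliXYZ_square[OF P] anti] K dag_pauliXYZ[OF P] by simp
  define S where "S = E (ketbra \<psi>)"
  have S: "S \<in> carrier_mat 2 2" and "psd 2 S" and "tr2 S = 1"
    using assms(5) channel_psd[OF assms(5) psd_ketbra[OF \<psi>]] tr2_ketbra_state[OF assms(3)] \<psi>
    by (simp_all add: S_def is_channel_def psd_def)
  have "0 \<le> tr2 (S * ketbra \<psi>)" and "0 \<le> tr2 (S * ketbra (P *\<^sub>v \<psi>))"
    using tr2_mult_ketbra_nonneg[OF \<open>psd 2 S\<close>] \<psi> Pc by simp_all
  then have "0 \<le> tr2 (S * eigenproj C 1)" and "0 \<le> tr2 (S * eigenproj C (-1))"
    using K R ketbra_mult_mat_vec[OF Pc \<psi>] by simp_all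
  moreover have "tr2 (S * eigenproj C 1) + tr2 (S * eigenproj C (-1)) = 1"
    using \<open>tr2 S = 1\<close> by (simp add: tr2_mult_eigenproj[OF S C] field_simps)
  ultimately obtain p where "0 \<le> p" "p \<le> 1" "tr2 (S * eigenproj C 1) = complex_of_real (1 - p)"
    "tr2 (S * eigenproj C (-1)) = complex_of_real p"
    using complex_convex_weights by blast
  then show ?thesis
    using twirl_eigenproj_decomposition[OF C herm assms(2) tr S] is_pauli_XYZ[OF P] K R
    unfolding S_def by metis
qed

end
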